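(* Let $w\ge 0$ and let $\mathcal{B}$ be a class of graphs such that $\operatorname{tw}(L(B))\le w$ for every $B\in\mathcal{B}$. Let $\mathcal{C}$ be the class of graphs obtained from graphs in $\mathcal{B}$ by successively applying the bridge operation, i.e., the smallest class containing $\mathcal{B}$ such that whenever $G_1,G_2\in\mathcal{C}$ (taken vertex-disjoint) and $v_1\in V(G_1)$, $v_2\in V(G_2)$ have neighborhoods $N(v_1)=\{x_1,y_1,z_1\}$, $N(v_2)=\{x_2,y_2,z_2\}$, the graph $(G_1-v_1)\cup(G_2-v_2)+x_1x_2+y_1y_2+z_1z_2$ belongs to $\mathcal{C}$. Then every $G\in\mathcal{C}$ satisfies $\operatorname{tw}(G)\le 2w+1$.
   Context: $\operatorname{tw}(H)$ denotes the treewidth of a graph $H$. The line graph $L(F)$ of a graph $F$ is the graph with vertex set $E(F)$ in which two vertices are adjacent exactly when the corresponding edges share an endvertex in $F$. *)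

theory Defs
  imports Main
begin

type_synonym 'a graph = "'a set \<times> 'a set set"

definition verts :: "'a graph \<Rightarrow> 'a set" where "verts G = fst G"
definition edges :: "'a graph \<Rightarrow> 'a set set" where "edges G = snd G"

definition graph :: "'a graph \<Rightarrow> bool" where
  "graph G \<longleftrightarrow> finite (verts G) \<and>
     (\<forall>e\<in>edges G. \<exists>x y. x \<noteq> y \<and> x \<in> verts G \<and> y \<in> verts G \<and> e = {x, y})"

definition nbhd :: "'a graph \<Rightarrow> 'a \<Rightarrow> 'a set" where
  "nbhd G v = {u. {u, v} \<in> edges G}"

definition line_graph :: "'a graph \<Rightarrow> 'a set graph" where
  "line_graph F = (edges F, {{e, f} | e f. e \<in> edges F \<and> f \<in> edges F \<and> e \<noteq> f \<and> e \<inter> f \<noteq> {}})"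

definition connected_in :: "'a graph \<Rightarrow> 'a set \<Rightarrow> bool" where
  "connected_in G S \<longleftrightarrow>
     (\<forall>s\<in>S. \<forall>t\<in>S. (\<lambda>a b. a \<in> S \<and> b \<in> S \<and> {a, b} \<in> edges G)\<^sup>*\<^sup>* s t)"

definition tree :: "'b graph \<Rightarrow> bool" where
  "tree T \<longleftrightarrow> graph T \<and> verts T \<noteq> {} \<and> connected_in T (verts T) \<and>
     card (edges T) = card (verts T) - 1"

definition tree_decomposition :: "'a graph \<Rightarrow> nat graph \<Rightarrow> (nat \<Rightarrow> 'a set) \<Rightarrow> bool" where
  "tree_decomposition G T bag \<longleftrightarrow> tree T \<and>
     (\<forall>t\<in>verts T. bag t \<subseteq> verts G) \<and>
     (\<forall>v\<in>verts G. \<exists>t\<in>verts T. v \<in> bag t) \<and>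
     (\<forall>e\<in>edges G. \<exists>t\<in>verts T. e \<subseteq> bag t) \<and>
     (\<forall>v\<in>verts G. connected_in T {t\<in>verts T. v \<in> bag t})"

text \<open>Treewidth: least k such that G has a tree decomposition with all bags of size at most k+1
  (the empty graph gets treewidth 0 instead of -1).\<close>
definition treewidth :: "'a graph \<Rightarrow> nat" where
  "treewidth G = (LEAST k. \<exists>T bag. tree_decomposition G T bag \<and>
                                   (\<forall>t\<in>verts T. card (bag t) \<le> k + 1))"

definition graph_iso :: "'a graph \<Rightarrow> 'a graph \<Rightarrow> bool" where
  "graph_iso G H \<longleftrightarrow> (\<exists>f. bij_betw f (verts G) (verts H) \<and> edges H = (\<lambda>e. f ` e) ` edges G)"

definition bridge :: "'a graph \<Rightarrow> 'a \<Rightarrow> 'a graph \<Rightarrow> 'a \<Rightarrow> 'a \<Rightarrow> 'a \<Rightarrow> 'a \<Rightarrow> 'a \<Rightarrow> 'a \<Rightarrow> 'a \<Rightarrow> 'a graph" where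
  "bridge G1 v1 G2 v2 x1 y1 z1 x2 y2 z2 =
     ((verts G1 - {v1}) \<union> (verts G2 - {v2}),
      {e \<in> edges G1. v1 \<notin> e} \<union> {e \<in> edges G2. v2 \<notin> e} \<union> {{x1, x2}, {y1, y2}, {z1, z2}})"

text \<open>Closure of a class B under the bridge operation (and under isomorphism, since a
  class of graphs is isomorphism-closed and the operands must be taken vertex-disjoint).\<close>
inductive_set bridge_closure :: "'a graph set \<Rightarrow> 'a graph set" for B :: "'a graph set" where
  base: "G \<in> B \<Longrightarrow> G \<in> bridge_closure B"
| iso: "G \<in> bridge_closure B \<Longrightarrow> graph_iso G H \<Longrightarrow> H \<in> bridge_closure B"
| bridge: "G1 \<in> bridge_closure B \<Longrightarrow> G2 \<in> bridge_closure B \<Longrightarrow>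
     verts G1 \<inter> verts G2 = {} \<Longrightarrow> v1 \<in> verts G1 \<Longrightarrow> v2 \<in> verts G2 \<Longrightarrow>
     nbhd G1 v1 = {x1, y1, z1} \<Longrightarrow> card {x1, y1, z1} = 3 \<Longrightarrow>
     nbhd G2 v2 = {x2, y2, z2} \<Longrightarrow> card {x2, y2, z2} = 3 \<Longrightarrow>
     bridge G1 v1 G2 v2 x1 y1 z1 x2 y2 z2 \<in> bridge_closure B"

end

theory Submission
  imports Defs
begin

text \<open>Replacing every edge in a bag of a tree decomposition of the line graph L(G) by its two
ends gives a tree decomposition of G (up to isolated vertices) with at most twice as many
vertices per bag, so tw(G) \<le> 2 tw(L(G)) + 1, and it suffices to show tw(L(G)) \<le> w on the
whole closure. Rename the edges v1 u of G1 and v2 u of G2 after the new edges x1 x2, y1 y2,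
z1 z2 of the bridge. Then the line graph of the bridge is a spanning subgraph of the union of
the renamed L(G1) and L(G2), which share exactly the triangle formed by the three new edges.
By the Helly property of subtrees of a tree, each of the two decompositions has a bag
containing this triangle, and joining the two trees by an edge between these bags yields a
decomposition of the union without larger bags.\<close>

section \<open>Graphs\<close>

lemma verts_pair [simp]: "verts (V, E) = V"
  by (simp add: verts_def)

lemma edges_pair [simp]: "edges (V, E) = E"
  by (simp add: edges_def)

lemma verts_edges_pair [simp]: "(verts G, edges G) = G"
  by (simp add: verts_def edges_def)

lemma graph_iff:
  "graph G \<longleftrightarrow> finite (verts G) \<and> (\<forall>e\<in>edges G. e \<subseteq> verts G \<and> card e = 2)"
proof -
  have "(\<exists>x y. x \<noteq> y \<and> x \<in> V \<and> y \<in> V \<and> e = {x, y}) \<longleftrightarrow> e \<subseteq> V \<and> card e = 2" for e :: "'a set" and V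
    unfolding card_2_iff by auto
  then show ?thesis unfolding graph_def by auto
qed

lemma graph_finite: "graph G \<Longrightarrow> finite (verts G)"
  by (simp add: graph_iff)

lemma graph_edge_subset: "graph G \<Longrightarrow> e \<in> edges G \<Longrightarrow> e \<subseteq> verts G"
  by (simp add: graph_iff)

lemma graph_edge_card: "graph G \<Longrightarrow> e \<in> edges G \<Longrightarrow> card e = 2"
  by (simp add: graph_iff)

lemma graph_edge_neq: "graph G \<Longrightarrow> {a, b} \<in> edges G \<Longrightarrow> a \<noteq> b"
  using graph_edge_card by fastforce

lemma finite_edges: "graph G \<Longrightarrow> finite (edges G)"
  using graph_edge_subset unfolding graph_iff
  by (metis Pow_iff finite_Pow_iff finite_subset subsetI)

lemma nbhd_subset: "graph G \<Longrightarrow> nbhd G v \<subseteq> verts G - {v}"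
  unfolding nbhd_def using graph_edge_subset graph_edge_neq by fastforce

lemma edge_at_vertex:
  assumes "graph G" "e \<in> edges G" "v \<in> e"
  obtains u where "u \<in> nbhd G v" "e = {v, u}"
proof -
  obtain a b where "e = {a, b}" using assms(1,2) unfolding graph_def by blast
  with assms(3) obtain u where "e = {v, u}" by blast
  moreover from this assms(2) have "u \<in> nbhd G v"
    unfolding nbhd_def by (simp add: insert_commute)
  ultimately show ?thesis using that by blast
qed

definition map_graph :: "('a \<Rightarrow> 'b) \<Rightarrow> 'a graph \<Rightarrow> 'b graph" where
  "map_graph f G = (f ` verts G, image f ` edges G)"

definition graph_union :: "'a graph \<Rightarrow> 'a graph \<Rightarrow> 'a graph" where
  "graph_union G H = (verts G \<union> verts H, edges G \<union> edges H)"

definition clique :: "'a graph \<Rightarrow> 'a set \<Rightarrow> bool" where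
  "clique G C \<longleftrightarrow> (\<forall>a\<in>C. \<forall>b\<in>C. a \<noteq> b \<longrightarrow> {a, b} \<in> edges G)"

lemma verts_map_graph [simp]: "verts (map_graph f G) = f ` verts G"
  and edges_map_graph [simp]: "edges (map_graph f G) = image f ` edges G"
  by (simp_all add: map_graph_def)

lemma verts_graph_union [simp]: "verts (graph_union G H) = verts G \<union> verts H"
  and edges_graph_union [simp]: "edges (graph_union G H) = edges G \<union> edges H"
  by (simp_all add: graph_union_def)

lemma graph_map_graph:
  assumes "graph G" "inj_on f (verts G)"
  shows "graph (map_graph f G)"
  unfolding graph_iff
proof (intro conjI ballI)
  show "finite (verts (map_graph f G))" using assms(1) by (simp add: graph_iff)
  fix e assume "e \<in> edges (map_graph f G)"
  then obtain e' where e': "e' \<in> edges G" "e = f ` e'" by auto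
  then show "e \<subseteq> verts (map_graph f G)" using graph_edge_subset[OF assms(1)] by auto
  have "inj_on f e'" using inj_on_subset[OF assms(2) graph_edge_subset[OF assms(1) e'(1)]] .
  then show "card e = 2" using e' graph_edge_card[OF assms(1)] by (simp add: card_image)
qed

lemma inj_on_image_edges:
  assumes "graph G" "inj_on f (verts G)"
  shows "inj_on (image f) (edges G)"
  using inj_on_subset[OF inj_on_image_Pow[OF assms(2)]] graph_edge_subset[OF assms(1)] by blast

section \<open>Connected vertex sets and trees\<close>

abbreviation adj_in :: "'a graph \<Rightarrow> 'a set \<Rightarrow> 'a \<Rightarrow> 'a \<Rightarrow> bool" where
  "adj_in G S \<equiv> \<lambda>a b. a \<in> S \<and> b \<in> S \<and> {a, b} \<in> edges G"

lemma connected_in_image: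
  assumes "connected_in G S"
    and "\<And>a b. a \<in> S \<Longrightarrow> b \<in> S \<Longrightarrow> {a, b} \<in> edges G \<Longrightarrow> f a = f b \<or> {f a, f b} \<in> edges H"
  shows "connected_in H (f ` S)"
proof -
  have "(adj_in H (f ` S))\<^sup>*\<^sup>* (f s) (f t)" if "(adj_in G S)\<^sup>*\<^sup>* s t" for s t
    using that
  proof (induction rule: rtranclp_induct)
    case (step y z)
    then consider "f y = f z" | "{f y, f z} \<in> edges H" using assms(2)[of y z] by blast
    then show ?case
    proof cases
      case 1
      then show ?thesis using step.IH by simp
    next
      case 2
      then have "adj_in H (f ` S) (f y) (f z)" using step.hyps(2) by blast
      with step.IH show ?thesis by (rule rtranclp.rtrancl_into_rtrancl)
    qed
  qed simp
  then show ?thesis using assms(1) unfolding connected_in_def by blast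
qed

lemma connected_in_map_graph: "connected_in G S \<Longrightarrow> connected_in (map_graph f G) (f ` S)"
proof (erule connected_in_image)
  fix a b assume "{a, b} \<in> edges G"
  then have "f ` {a, b} \<in> image f ` edges G" by (rule imageI)
  then show "f a = f b \<or> {f a, f b} \<in> edges (map_graph f G)" by simp
qed

lemma connected_in_mono: "connected_in G S \<Longrightarrow> edges G \<subseteq> edges H \<Longrightarrow> connected_in H S"
  using connected_in_image[where f = id and G = G and H = H and S = S] by auto

lemma connected_in_Union:
  assumes "\<And>A. A \<in> F \<Longrightarrow> connected_in G A" and "\<And>A B. A \<in> F \<Longrightarrow> B \<in> F \<Longrightarrow> A \<inter> B \<noteq> {}"
  shows "connected_in G (\<Union>F)"
  unfolding connected_in_def
proof (intro ballI)
  have path: "(adj_in G (\<Union>F))\<^sup>*\<^sup>* s t" if "A \<in> F" "s \<in> A" "t \<in> A" for A s t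
  proof -
    have "(adj_in G A)\<^sup>*\<^sup>* s t" using assms(1) that unfolding connected_in_def by blast
    then show ?thesis by (rule rtranclp_mono[THEN predicate2D, rotated]) (use that in auto)
  qed
  fix s t assume "s \<in> \<Union>F" "t \<in> \<Union>F"
  then obtain A B where AB: "A \<in> F" "B \<in> F" "s \<in> A" "t \<in> B" by blast
  moreover obtain x where "x \<in> A" "x \<in> B" using assms(2)[OF AB(1,2)] by blast
  ultimately have "(adj_in G (\<Union>F))\<^sup>*\<^sup>* s x" "(adj_in G (\<Union>F))\<^sup>*\<^sup>* x t"
    using path[of A] path[of B] by simp_all
  then show "(adj_in G (\<Union>F))\<^sup>*\<^sup>* s t" by (rule rtranclp_trans)
qed

lemma connected_in_Un:
  "connected_in G A \<Longrightarrow> connected_in G B \<Longrightarrow> A \<inter> B \<noteq> {} \<Longrightarrow> connected_in G (A \<union> B)"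
  using connected_in_Union[of "{A, B}" G] by auto

lemma connected_in_edge: "{a, b} \<in> edges G \<Longrightarrow> connected_in G {a, b}"
  unfolding connected_in_def by (auto simp: insert_commute)

lemma connected_in_singleton: "connected_in G {a}"
  unfolding connected_in_def by simp

lemma connected_in_join:
  assumes "connected_in G A" "connected_in G B" "a \<in> A" "b \<in> B" "{a, b} \<in> edges G"
  shows "connected_in G (A \<union> B)"
proof -
  have "connected_in G ((A \<union> {a, b}) \<union> B)"
    using assms connected_in_edge[OF assms(5)] by (intro connected_in_Un) auto
  moreover have "(A \<union> {a, b}) \<union> B = A \<union> B" using assms(3,4) by blast
  ultimately show ?thesis by simp
qed

lemma tree_graph: "tree T \<Longrightarrow> graph T"
  and tree_nonempty: "tree T \<Longrightarrow> verts T \<noteq> {}"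
  and tree_connected: "tree T \<Longrightarrow> connected_in T (verts T)"
  and tree_card_edges: "tree T \<Longrightarrow> card (edges T) = card (verts T) - 1"
  unfolding tree_def by blast+

lemma tree_singleton: "tree ({t}, {})"
  unfolding tree_def graph_def by (simp add: connected_in_singleton)

lemma tree_join:
  assumes T1: "tree T1" and T2: "tree T2" and disj: "verts T1 \<inter> verts T2 = {}"
    and a: "a \<in> verts T1" and b: "b \<in> verts T2"
  shows "tree (verts T1 \<union> verts T2, edges T1 \<union> edges T2 \<union> {{a, b}})" (is "tree ?T")
proof -
  have G1: "graph T1" and G2: "graph T2" using T1 T2 by (simp_all add: tree_graph)
  have fin: "finite (verts T1)" "finite (verts T2)" "finite (edges T1)" "finite (edges T2)"
    using G1 G2 by (simp_all add: graph_finite finite_edges)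
  have "a \<noteq> b" using a b disj by blast
  then have "graph ?T"
    using G1 G2 a b fin by (auto simp: graph_iff)
  moreover have "connected_in ?T (verts T1 \<union> verts T2)"
    using connected_in_mono[OF tree_connected[OF T1], of ?T]
      connected_in_mono[OF tree_connected[OF T2], of ?T] a b
    by (intro connected_in_join) auto
  moreover have "card (edges ?T) = card (verts ?T) - 1"
  proof -
    have "e \<notin> edges T2" if "e \<in> edges T1" for e
    proof
      assume "e \<in> edges T2"
      then have "e = {}" using that graph_edge_subset[OF G1] graph_edge_subset[OF G2] disj by blast
      then show False using graph_edge_card[OF G1 that] by simp
    qed
    then have "edges T1 \<inter> edges T2 = {}" by blast
    moreover have "{a, b} \<notin> edges T1 \<union> edges T2"
      using graph_edge_subset[OF G1] graph_edge_subset[OF G2] disj a b by blast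
    ultimately have "card (edges ?T) = card (edges T1) + card (edges T2) + 1"
      using fin by (simp add: card_Un_disjoint)
    moreover have "card (verts T1) > 0" "card (verts T2) > 0"
      using fin tree_nonempty[OF T1] tree_nonempty[OF T2] by auto
    ultimately show ?thesis
      using fin disj tree_card_edges[OF T1] tree_card_edges[OF T2] by (simp add: card_Un_disjoint)
  qed
  ultimately show ?thesis unfolding tree_def using tree_nonempty[OF T1] by simp
qed

lemma tree_map_graph:
  assumes T: "tree T" and inj: "inj_on f (verts T)"
  shows "tree (map_graph f T)"
proof -
  have G: "graph T" using T by (rule tree_graph)
  have "inj_on (image f) (edges T)" using G inj by (rule inj_on_image_edges)
  then have "card (edges (map_graph f T)) = card (edges T)" by (simp add: card_image)
  moreover have "card (verts (map_graph f T)) = card (verts T)" using inj by (simp add: card_image)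
  moreover have "connected_in (map_graph f T) (f ` verts T)"
    using tree_connected[OF T] by (rule connected_in_map_graph)
  ultimately show ?thesis
    using T graph_map_graph[OF G inj] unfolding tree_def by simp
qed

lemma degree_sum:
  assumes G: "graph G"
  shows "(\<Sum>v\<in>verts G. card {e\<in>edges G. v \<in> e}) = 2 * card (edges G)"
proof -
  have fin: "finite (verts G)" "finite (edges G)" using G by (simp_all add: graph_finite finite_edges)
  have "(\<Sum>v\<in>verts G. card {e\<in>edges G. v \<in> e}) = (\<Sum>v\<in>verts G. \<Sum>e\<in>{e\<in>edges G. v \<in> e}. 1)"
    by simp
  also have "\<dots> = (\<Sum>e\<in>edges G. \<Sum>v\<in>{v\<in>verts G. v \<in> e}. 1)"
    by (rule sum.swap_restrict[OF fin])
  also have "\<dots> = (\<Sum>e\<in>edges G. card {v\<in>verts G. v \<in> e})"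
    by simp
  also have "\<dots> = (\<Sum>e\<in>edges G. 2)"
  proof (rule sum.cong)
    fix e assume "e \<in> edges G"
    then have "{v\<in>verts G. v \<in> e} = e" using graph_edge_subset[OF G] by blast
    with \<open>e \<in> edges G\<close> show "card {v\<in>verts G. v \<in> e} = 2" using graph_edge_card[OF G] by simp
  qed simp
  finally show ?thesis by simp
qed

lemma tree_vertex_has_edge:
  assumes T: "tree T" and two: "2 \<le> card (verts T)" and v: "v \<in> verts T"
  obtains u where "{v, u} \<in> edges T"
proof -
  have "\<not> verts T \<subseteq> {v}"
  proof
    assume "verts T \<subseteq> {v}"
    then have "card (verts T) \<le> card {v}" by (rule card_mono[rotated]) simp
    then show False using two by simp
  qed
  then obtain u where u: "u \<in> verts T" "u \<noteq> v" by blast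
  have "(adj_in T (verts T))\<^sup>*\<^sup>* v u"
    using tree_connected[OF T] v u(1) unfolding connected_in_def by blast
  then have "\<exists>y. {v, y} \<in> edges T"
  proof (cases rule: converse_rtranclpE)
    case base
    with u(2) show ?thesis by simp
  next
    case (step y)
    then show ?thesis by blast
  qed
  then show ?thesis using that by blast
qed

lemma tree_has_leaf:
  assumes T: "tree T" and two: "2 \<le> card (verts T)"
  obtains l p where "{l, p} \<in> edges T" "\<And>u. {u, l} \<in> edges T \<Longrightarrow> u = p"
proof -
  have G: "graph T" using T by (rule tree_graph)
  have fin: "finite (verts T)" "finite (edges T)" using G by (simp_all add: graph_finite finite_edges)
  define deg where "deg v = card {e\<in>edges T. v \<in> e}" for v
  have deg_pos: "deg v \<ge> 1" if v: "v \<in> verts T" for v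
  proof -
    obtain u where "{v, u} \<in> edges T" by (rule tree_vertex_has_edge[OF T two v])
    then have "{e\<in>edges T. v \<in> e} \<noteq> {}" by blast
    then show ?thesis unfolding deg_def using fin(2) by (simp add: Suc_le_eq card_gt_0_iff)
  qed
  have "\<exists>l\<in>verts T. deg l = 1"
  proof (rule ccontr)
    assume no_leaf: "\<not> (\<exists>l\<in>verts T. deg l = 1)"
    have "(\<Sum>v\<in>verts T. 2) \<le> (\<Sum>v\<in>verts T. deg v)"
    proof (rule sum_mono)
      fix v assume "v \<in> verts T"
      then have "deg v \<ge> 1" "deg v \<noteq> 1" using deg_pos no_leaf by auto
      then show "2 \<le> deg v" by linarith
    qed
    then have "2 * card (verts T) \<le> (\<Sum>v\<in>verts T. deg v)" by simp
    also have "\<dots> = 2 * card (edges T)" unfolding deg_def by (rule degree_sum[OF G])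
    finally show False using tree_card_edges[OF T] two by simp
  qed
  then obtain l where "deg l = 1" by blast
  then obtain e where e: "{e'\<in>edges T. l \<in> e'} = {e}"
    unfolding deg_def by (rule card_1_singletonE)
  then have "e \<in> {e'\<in>edges T. l \<in> e'}" by simp
  then have "e \<in> edges T" "l \<in> e" by simp_all
  then obtain p where p: "e = {l, p}" using edge_at_vertex[OF G] by blast
  have uniq: "u = p" if "{u, l} \<in> edges T" for u
  proof -
    have "{u, l} \<in> {e'\<in>edges T. l \<in> e'}" using that by simp
    then have "{u, l} = {l, p}" using e p by simp
    then show ?thesis by (auto simp: doubleton_eq_iff)
  qed
  show ?thesis by (rule that[of l p]) (use \<open>e \<in> edges T\<close> p uniq in simp_all)
qed

lemma connected_in_contract_leaf:
  assumes "connected_in T X" and leaf: "\<And>u. {u, l} \<in> edges T \<Longrightarrow> u = p"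
  shows "connected_in (verts T - {l}, edges T - {{l, p}}) ((\<lambda>t. if t = l then p else t) ` X)"
proof (rule connected_in_image[OF assms(1)])
  fix a b assume ab: "{a, b} \<in> edges T"
  consider "a = l" | "b = l" | "a \<noteq> l" "b \<noteq> l" by blast
  then show "(if a = l then p else a) = (if b = l then p else b) \<or>
      {if a = l then p else a, if b = l then p else b} \<in> edges (verts T - {l}, edges T - {{l, p}})"
  proof cases
    case 1
    then have "b = p" using ab leaf[of b] by (simp add: insert_commute)
    then show ?thesis using 1 by simp
  next
    case 2
    then have "a = p" using ab leaf[of a] by simp
    then show ?thesis using 2 by simp
  next
    case 3
    then have "{a, b} \<noteq> {l, p}" by (auto simp: doubleton_eq_iff)
    then show ?thesis using 3 ab by simp
  qed
qed

lemma tree_remove_leaf: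
  assumes T: "tree T" and lp: "{l, p} \<in> edges T" and leaf: "\<And>u. {u, l} \<in> edges T \<Longrightarrow> u = p"
  shows "tree (verts T - {l}, edges T - {{l, p}})" (is "tree ?T")
proof -
  have G: "graph T" using T by (rule tree_graph)
  have l: "l \<in> verts T" "p \<in> verts T" "l \<noteq> p"
    using lp graph_edge_neq[OF G] graph_edge_subset[OF G] by auto
  have "l \<notin> e" if e: "e \<in> edges T - {{l, p}}" for e
  proof
    assume "l \<in> e"
    then obtain u where "e = {l, u}" using edge_at_vertex[OF G] e by blast
    then show False using leaf[of u] e by (simp add: insert_commute)
  qed
  then have "graph ?T"
    using G graph_edge_subset[OF G] graph_edge_card[OF G] unfolding graph_iff by auto
  moreover have "connected_in ?T (verts T - {l})"
  proof -
    have "connected_in ?T ((\<lambda>t. if t = l then p else t) ` verts T)"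
      by (rule connected_in_contract_leaf[OF tree_connected[OF T]]) (rule leaf)
    moreover have "(\<lambda>t. if t = l then p else t) ` verts T = verts T - {l}" using l by auto
    ultimately show ?thesis by simp
  qed
  moreover have "card (edges ?T) = card (verts ?T) - 1"
    using tree_card_edges[OF T] lp l by simp
  moreover have "verts ?T \<noteq> {}" using l by auto
  ultimately show ?thesis unfolding tree_def by simp
qed

lemma leaf_contraction_preimage:
  assumes X: "connected_in T X" and q: "q \<in> (\<lambda>t. if t = l then p else t) ` X"
    and leaf: "\<And>u. {u, l} \<in> edges T \<Longrightarrow> u = p"
  shows "X = {l} \<or> q \<in> X"
proof -
  obtain t where t: "t \<in> X" "q = (if t = l then p else t)" using q by blast
  show ?thesis
  proof (cases "t = l \<and> X \<noteq> {l}")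
    case True
    then obtain x where x: "x \<in> X" "x \<noteq> l" using t(1) by blast
    have "(adj_in T X)\<^sup>*\<^sup>* l x" using X t(1) x(1) True unfolding connected_in_def by blast
    then have "\<exists>y\<in>X. {l, y} \<in> edges T"
    proof (cases rule: converse_rtranclpE)
      case base
      with x(2) show ?thesis by simp
    next
      case (step y)
      then show ?thesis by blast
    qed
    then have "p \<in> X" using leaf by (auto simp: insert_commute)
    then show ?thesis using True t(2) by simp
  qed (use t in auto)
qed

lemma tree_Helly:
  assumes "tree T" "A \<subseteq> verts T" "B \<subseteq> verts T" "C \<subseteq> verts T"
    "connected_in T A" "connected_in T B" "connected_in T C"
    "A \<inter> B \<noteq> {}" "A \<inter> C \<noteq> {}" "B \<inter> C \<noteq> {}"
  shows "A \<inter> B \<inter> C \<noteq> {}"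
  using assms
proof (induction "card (verts T)" arbitrary: T A B C rule: less_induct)
  case less
  have T: "tree T" by (rule less.prems(1))
  have fin: "finite (verts T)" using T by (simp add: tree_graph graph_finite)
  show ?case
  proof (cases "2 \<le> card (verts T)")
    case False
    moreover have "card (verts T) \<noteq> 0" using fin tree_nonempty[OF T] by simp
    ultimately have "card (verts T) = 1" by simp
    then obtain c where c: "verts T = {c}" by (rule card_1_singletonE)
    have "A \<noteq> {}" "B \<noteq> {}" "C \<noteq> {}" using less.prems(8,10) by auto
    then have "c \<in> A" "c \<in> B" "c \<in> C" using less.prems(2-4) unfolding c by auto
    then show ?thesis by blast
  next
    case True
    then obtain l p where lp: "{l, p} \<in> edges T" and leaf: "\<And>u. {u, l} \<in> edges T \<Longrightarrow> u = p"
      using tree_has_leaf[OF T] by blast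
    have l: "l \<in> verts T" "p \<in> verts T" "l \<noteq> p"
      using lp graph_edge_neq[OF tree_graph[OF T]] graph_edge_subset[OF tree_graph[OF T]] by auto
    txt \<open>Contract the leaf edge \<open>{l, p}\<close>. The images of A, B, C stay connected and pairwise
      intersecting, and a common point of the images is common to A, B, C unless one of them
      is \<open>{l}\<close>.\<close>
    define c where "c t = (if t = l then p else t)" for t
    define T' where "T' = (verts T - {l}, edges T - {{l, p}})"
    have smaller: "card (verts T') < card (verts T)"
      unfolding T'_def using card_Diff1_less[OF fin l(1)] by simp
    have tree': "tree T'" unfolding T'_def using tree_remove_leaf[OF T lp leaf] .
    have sub: "c ` X \<subseteq> verts T'" if "X \<subseteq> verts T" for X
      unfolding T'_def c_def using that l by auto
    have con: "connected_in T' (c ` X)" if "connected_in T X" for X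
      unfolding T'_def c_def by (rule connected_in_contract_leaf[OF that]) (rule leaf)
    have meet: "c ` X \<inter> c ` Y \<noteq> {}" if "X \<inter> Y \<noteq> {}" for X Y
      using that by blast
    have "c ` A \<inter> c ` B \<inter> c ` C \<noteq> {}"
      by (rule less.hyps[OF smaller tree' sub[OF less.prems(2)] sub[OF less.prems(3)]
          sub[OF less.prems(4)] con[OF less.prems(5)] con[OF less.prems(6)] con[OF less.prems(7)]
          meet[OF less.prems(8)] meet[OF less.prems(9)] meet[OF less.prems(10)]])
    then obtain q where q: "q \<in> c ` A" "q \<in> c ` B" "q \<in> c ` C" by blast
    have shrink: "X = {l} \<or> q \<in> X" if "q \<in> c ` X" "connected_in T X" for X
      using leaf_contraction_preimage[OF that(2) _ leaf] that(1) unfolding c_def by blast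
    show ?thesis
    proof (cases "A = {l} \<or> B = {l} \<or> C = {l}")
      case True
      then have "l \<in> A \<inter> B \<inter> C" using less.prems(8-10) by (elim disjE) auto
      then show ?thesis by blast
    next
      case False
      then show ?thesis using shrink[OF q(1) less.prems(5)] shrink[OF q(2) less.prems(6)]
          shrink[OF q(3) less.prems(7)] by blast
    qed
  qed
qed

section \<open>Tree decompositions\<close>

definition treewidth_at_most :: "'a graph \<Rightarrow> nat \<Rightarrow> bool" where
  "treewidth_at_most G k \<longleftrightarrow>
     (\<exists>T bag. tree_decomposition G T bag \<and> (\<forall>t\<in>verts T. card (bag t) \<le> k + 1))"

lemma tree_decompositionD:
  assumes "tree_decomposition G T bag"
  shows tree_decomposition_tree: "tree T"
    and tree_decomposition_bag: "t \<in> verts T \<Longrightarrow> bag t \<subseteq> verts G"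
    and tree_decomposition_vertex: "v \<in> verts G \<Longrightarrow> \<exists>t\<in>verts T. v \<in> bag t"
    and tree_decomposition_edge: "e \<in> edges G \<Longrightarrow> \<exists>t\<in>verts T. e \<subseteq> bag t"
    and tree_decomposition_connected:
      "v \<in> verts G \<Longrightarrow> connected_in T {t\<in>verts T. v \<in> bag t}"
  using assms unfolding tree_decomposition_def by blast+

lemma tree_decomposition_occurrences_connected:
  assumes td: "tree_decomposition G T bag"
  shows "connected_in T {t\<in>verts T. v \<in> bag t}"
proof (cases "v \<in> verts G")
  case True
  then show ?thesis by (rule tree_decomposition_connected[OF td])
next
  case False
  then have none: "{t\<in>verts T. v \<in> bag t} = {}" using tree_decomposition_bag[OF td] by blast
  show ?thesis unfolding none connected_in_def by simp
qed

lemma tree_decomposition_occurrences_meet: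
  assumes td: "tree_decomposition G T bag" and "a \<in> verts G" and "a = b \<or> {a, b} \<in> edges G"
  shows "{t\<in>verts T. a \<in> bag t} \<inter> {t\<in>verts T. b \<in> bag t} \<noteq> {}"
  using assms(3)
proof
  assume "a = b"
  then show ?thesis using tree_decomposition_vertex[OF td assms(2)] by blast
next
  assume "{a, b} \<in> edges G"
  then show ?thesis using tree_decomposition_edge[OF td] by blast
qed

lemma tree_decomposition_trivial:
  assumes "\<And>e. e \<in> edges G \<Longrightarrow> e \<subseteq> verts G"
  shows "tree_decomposition G ({0}, {}) (\<lambda>_. verts G)"
proof -
  have "{t \<in> {0::nat}. v \<in> verts G} = {0}" if "v \<in> verts G" for v using that by blast
  then show ?thesis
    using assms tree_singleton unfolding tree_decomposition_def by (simp add: connected_in_singleton)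
qed

lemma treewidth_at_most_iff:
  assumes "\<And>e. e \<in> edges G \<Longrightarrow> e \<subseteq> verts G"
  shows "treewidth_at_most G k \<longleftrightarrow> treewidth G \<le> k"
proof
  have eq: "treewidth G = (LEAST k. treewidth_at_most G k)"
    unfolding treewidth_def treewidth_at_most_def ..
  show "treewidth G \<le> k" if "treewidth_at_most G k" unfolding eq using that by (rule Least_le)
  have "treewidth_at_most G (card (verts G))"
    using tree_decomposition_trivial[OF assms] unfolding treewidth_at_most_def by fastforce
  then have "treewidth_at_most G (treewidth G)" unfolding eq by (rule LeastI)
  then show "treewidth_at_most G k" if "treewidth G \<le> k"
    using that unfolding treewidth_at_most_def by fastforce
qed

lemma tree_decomposition_spanning_subgraph:
  "tree_decomposition G T bag \<Longrightarrow> verts H = verts G \<Longrightarrow> edges H \<subseteq> edges G \<Longrightarrow>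
    tree_decomposition H T bag"
  unfolding tree_decomposition_def by blast

lemma treewidth_at_most_spanning_subgraph:
  "treewidth_at_most G k \<Longrightarrow> verts H = verts G \<Longrightarrow> edges H \<subseteq> edges G \<Longrightarrow>
    treewidth_at_most H k"
  unfolding treewidth_at_most_def using tree_decomposition_spanning_subgraph by blast

lemma tree_decomposition_map_graph:
  assumes td: "tree_decomposition G T bag" and inj: "inj_on f (verts G)"
  shows "tree_decomposition (map_graph f G) T (\<lambda>t. f ` bag t)"
  unfolding tree_decomposition_def verts_map_graph edges_map_graph
proof (intro conjI ballI)
  show "tree T" using td by (rule tree_decomposition_tree)
  fix t assume "t \<in> verts T"
  then show "f ` bag t \<subseteq> f ` verts G" using tree_decomposition_bag[OF td] by (simp add: image_mono)
next
  fix v assume "v \<in> f ` verts G"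
  then show "\<exists>t\<in>verts T. v \<in> f ` bag t" using tree_decomposition_vertex[OF td] by blast
next
  fix e assume "e \<in> image f ` edges G"
  then obtain e' where "e' \<in> edges G" "e = f ` e'" by blast
  then show "\<exists>t\<in>verts T. e \<subseteq> f ` bag t"
    using tree_decomposition_edge[OF td] by (meson image_mono)
next
  fix v assume "v \<in> f ` verts G"
  then obtain u where u: "u \<in> verts G" "v = f u" by blast
  have "{t\<in>verts T. f u \<in> f ` bag t} = {t\<in>verts T. u \<in> bag t}"
    using tree_decomposition_bag[OF td] u(1) inj_on_image_mem_iff[OF inj] by blast
  then show "connected_in T {t\<in>verts T. v \<in> f ` bag t}"
    using tree_decomposition_connected[OF td u(1)] u(2) by simp
qed

lemma treewidth_at_most_map_graph:
  assumes "treewidth_at_most G k" "inj_on f (verts G)"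
  shows "treewidth_at_most (map_graph f G) k"
proof -
  obtain T bag where td: "tree_decomposition G T bag" and k: "\<forall>t\<in>verts T. card (bag t) \<le> k + 1"
    using assms(1) unfolding treewidth_at_most_def by blast
  have "card (f ` bag t) = card (bag t)" if "t \<in> verts T" for t
    using tree_decomposition_bag[OF td that] inj_on_subset[OF assms(2)] by (simp add: card_image)
  then have "\<forall>t\<in>verts T. card (f ` bag t) \<le> k + 1" using k by simp
  then show ?thesis
    using tree_decomposition_map_graph[OF td assms(2)] unfolding treewidth_at_most_def by blast
qed

lemma tree_decomposition_shift:
  assumes td: "tree_decomposition G T bag"
  shows "tree_decomposition G (map_graph (\<lambda>t. t + n) T) (\<lambda>t. bag (t - n))"
  unfolding tree_decomposition_def verts_map_graph
proof (intro conjI ballI)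
  show "tree (map_graph (\<lambda>t. t + n) T)"
    by (rule tree_map_graph[OF tree_decomposition_tree[OF td]]) (simp add: inj_on_def)
  fix t assume "t \<in> (\<lambda>t. t + n) ` verts T"
  then obtain u where "u \<in> verts T" "t = u + n" by blast
  then show "bag (t - n) \<subseteq> verts G" using tree_decomposition_bag[OF td] by simp
next
  fix v assume "v \<in> verts G"
  then obtain t where "t \<in> verts T" "v \<in> bag t" using tree_decomposition_vertex[OF td] by blast
  then show "\<exists>t\<in>(\<lambda>t. t + n) ` verts T. v \<in> bag (t - n)" by (intro bexI[of _ "t + n"]) simp_all
next
  fix e assume "e \<in> edges G"
  then obtain t where "t \<in> verts T" "e \<subseteq> bag t" using tree_decomposition_edge[OF td] by blast
  then show "\<exists>t\<in>(\<lambda>t. t + n) ` verts T. e \<subseteq> bag (t - n)" by (intro bexI[of _ "t + n"]) simp_all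
next
  fix v assume v: "v \<in> verts G"
  have "{t \<in> (\<lambda>t. t + n) ` verts T. v \<in> bag (t - n)} = (\<lambda>t. t + n) ` {t\<in>verts T. v \<in> bag t}"
    by force
  moreover have "connected_in (map_graph (\<lambda>t. t + n) T) ((\<lambda>t. t + n) ` {t\<in>verts T. v \<in> bag t})"
    using tree_decomposition_connected[OF td v] by (rule connected_in_map_graph)
  ultimately show "connected_in (map_graph (\<lambda>t. t + n) T) {t \<in> (\<lambda>t. t + n) ` verts T. v \<in> bag (t - n)}"
    by simp
qed

lemma tree_decomposition_join:
  assumes td1: "tree_decomposition G1 T1 bag1" and td2: "tree_decomposition G2 T2 bag2"
    and disj: "verts T1 \<inter> verts T2 = {}" and a: "a \<in> verts T1" and b: "b \<in> verts T2"
    and sep: "verts G1 \<inter> verts G2 \<subseteq> bag1 a \<inter> bag2 b"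
  shows "tree_decomposition (graph_union G1 G2)
     (verts T1 \<union> verts T2, edges T1 \<union> edges T2 \<union> {{a, b}})
     (\<lambda>t. if t \<in> verts T1 then bag1 t else bag2 t)"
  (is "tree_decomposition _ ?T ?bag")
proof -
  have bag2: "?bag t = bag2 t" if "t \<in> verts T2" for t using that disj by auto
  have some_bag: "\<exists>t\<in>verts ?T. P (?bag t)"
    if "(\<exists>t\<in>verts T1. P (bag1 t)) \<or> (\<exists>t\<in>verts T2. P (bag2 t))" for P
    using that
  proof (elim disjE bexE)
    fix t assume "t \<in> verts T1" "P (bag1 t)"
    then show ?thesis by (intro bexI[of _ t]) simp_all
  next
    fix t assume "t \<in> verts T2" "P (bag2 t)"
    then show ?thesis using bag2[of t] by (intro bexI[of _ t]) simp_all
  qed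
  have con: "connected_in ?T {t\<in>verts ?T. v \<in> ?bag t}" for v
  proof -
    define S1 where "S1 = {t\<in>verts T1. v \<in> bag1 t}"
    define S2 where "S2 = {t\<in>verts T2. v \<in> bag2 t}"
    have "{t\<in>verts ?T. v \<in> ?bag t} = S1 \<union> S2" unfolding S1_def S2_def using bag2 disj by auto
    moreover have "connected_in ?T S1" unfolding S1_def
      using tree_decomposition_occurrences_connected[OF td1] by (rule connected_in_mono) auto
    moreover have "connected_in ?T S2" unfolding S2_def
      using tree_decomposition_occurrences_connected[OF td2] by (rule connected_in_mono) auto
    moreover have "a \<in> S1 \<and> b \<in> S2 \<or> S1 = {} \<or> S2 = {}"
      unfolding S1_def S2_def using tree_decomposition_bag[OF td1] tree_decomposition_bag[OF td2] sep a b
      by blast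
    ultimately show ?thesis by (auto intro: connected_in_join)
  qed
  show ?thesis
    unfolding tree_decomposition_def verts_graph_union edges_graph_union
  proof (intro conjI ballI)
    show "tree ?T"
      using tree_join[OF tree_decomposition_tree[OF td1] tree_decomposition_tree[OF td2] disj a b] .
  next
    fix t assume "t \<in> verts ?T"
    then show "?bag t \<subseteq> verts G1 \<union> verts G2"
      using tree_decomposition_bag[OF td1] tree_decomposition_bag[OF td2] bag2 by auto
  next
    fix v assume "v \<in> verts G1 \<union> verts G2"
    then show "\<exists>t\<in>verts ?T. v \<in> ?bag t"
      using tree_decomposition_vertex[OF td1] tree_decomposition_vertex[OF td2]
      by (intro some_bag[of "\<lambda>X. v \<in> X"]) blast
  next
    fix e assume "e \<in> edges G1 \<union> edges G2"
    then show "\<exists>t\<in>verts ?T. e \<subseteq> ?bag t"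
      using tree_decomposition_edge[OF td1] tree_decomposition_edge[OF td2]
      by (intro some_bag[of "\<lambda>X. e \<subseteq> X"]) blast
  qed (rule con)
qed

lemma treewidth_at_most_glue:
  assumes td1: "tree_decomposition G1 T1 bag1" and k1: "\<forall>t\<in>verts T1. card (bag1 t) \<le> k + 1"
    and td2: "tree_decomposition G2 T2 bag2" and k2: "\<forall>t\<in>verts T2. card (bag2 t) \<le> k + 1"
    and a: "a \<in> verts T1" and b: "b \<in> verts T2"
    and sep: "verts G1 \<inter> verts G2 \<subseteq> bag1 a \<inter> bag2 b"
  shows "treewidth_at_most (graph_union G1 G2) k"
proof -
  define n where "n = Suc (Max (verts T1))"
  define T2' where "T2' = map_graph (\<lambda>t. t + n) T2"
  define T where "T = (verts T1 \<union> verts T2', edges T1 \<union> edges T2' \<union> {{a, b + n}})"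
  define bag where "bag t = (if t \<in> verts T1 then bag1 t else bag2 (t - n))" for t
  have fin: "finite (verts T1)"
    using tree_graph[OF tree_decomposition_tree[OF td1]] by (rule graph_finite)
  have "t < n" if "t \<in> verts T1" for t using Max_ge[OF fin that] unfolding n_def by simp
  then have disj: "verts T1 \<inter> verts T2' = {}" unfolding T2'_def by fastforce
  have td2': "tree_decomposition G2 T2' (\<lambda>t. bag2 (t - n))"
    unfolding T2'_def using td2 by (rule tree_decomposition_shift)
  have b': "b + n \<in> verts T2'" unfolding T2'_def using b by simp
  have sep': "verts G1 \<inter> verts G2 \<subseteq> bag1 a \<inter> bag2 (b + n - n)" using sep by simp
  have "tree_decomposition (graph_union G1 G2) T bag"
    unfolding T_def bag_def by (rule tree_decomposition_join[OF td1 td2' disj a b' sep'])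
  moreover have "\<forall>t\<in>verts T. card (bag t) \<le> k + 1"
    using k1 k2 unfolding T_def T2'_def bag_def by auto
  ultimately show ?thesis unfolding treewidth_at_most_def by blast
qed

lemma tree_decomposition_triangle_in_bag:
  assumes td: "tree_decomposition G T bag" and "{a, b, c} \<subseteq> verts G" and "clique G {a, b, c}"
  obtains t where "t \<in> verts T" "{a, b, c} \<subseteq> bag t"
proof -
  define occ where "occ x = {t\<in>verts T. x \<in> bag t}" for x
  have meet: "occ x \<inter> occ y \<noteq> {}" if "x \<in> {a, b, c}" "y \<in> {a, b, c}" for x y
  proof -
    have "x = y \<or> {x, y} \<in> edges G" using assms(3) that unfolding clique_def by blast
    then show ?thesis
      using tree_decomposition_occurrences_meet[OF td] that assms(2) unfolding occ_def by blast
  qed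
  have "occ x \<subseteq> verts T" for x unfolding occ_def by blast
  moreover have "connected_in T (occ x)" if "x \<in> {a, b, c}" for x
    unfolding occ_def using tree_decomposition_connected[OF td] that assms(2) by blast
  ultimately have "occ a \<inter> occ b \<inter> occ c \<noteq> {}"
    using tree_Helly[OF tree_decomposition_tree[OF td]] meet by simp
  then show ?thesis using that unfolding occ_def by blast
qed

lemma treewidth_at_most_triangle_sum:
  assumes "treewidth_at_most G1 k" "treewidth_at_most G2 k"
    and sep: "verts G1 \<inter> verts G2 = {a, b, c}"
    and "clique G1 {a, b, c}" "clique G2 {a, b, c}"
  shows "treewidth_at_most (graph_union G1 G2) k"
proof -
  obtain T1 bag1 where td1: "tree_decomposition G1 T1 bag1" and k1: "\<forall>t\<in>verts T1. card (bag1 t) \<le> k + 1"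
    using assms(1) unfolding treewidth_at_most_def by blast
  obtain T2 bag2 where td2: "tree_decomposition G2 T2 bag2" and k2: "\<forall>t\<in>verts T2. card (bag2 t) \<le> k + 1"
    using assms(2) unfolding treewidth_at_most_def by blast
  have abc: "{a, b, c} \<subseteq> verts G1" "{a, b, c} \<subseteq> verts G2" using sep by blast+
  obtain t1 where t1: "t1 \<in> verts T1" "{a, b, c} \<subseteq> bag1 t1"
    by (rule tree_decomposition_triangle_in_bag[OF td1 abc(1) assms(4)])
  obtain t2 where t2: "t2 \<in> verts T2" "{a, b, c} \<subseteq> bag2 t2"
    by (rule tree_decomposition_triangle_in_bag[OF td2 abc(2) assms(5)])
  show ?thesis
    by (rule treewidth_at_most_glue[OF td1 k1 td2 k2 t1(1) t2(1)]) (use sep t1(2) t2(2) in blast)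
qed

lemma treewidth_at_most_add_vertices:
  assumes "finite V" and "treewidth_at_most G k"
  shows "treewidth_at_most (verts G \<union> V, edges G) k"
  using assms(1)
proof induction
  case empty
  then show ?case using assms(2) by simp
next
  case (insert v V)
  show ?case
  proof (cases "v \<in> verts G \<union> V")
    case True
    then show ?thesis using insert.IH by (simp add: insert_absorb)
  next
    case False
    obtain T bag where td: "tree_decomposition (verts G \<union> V, edges G) T bag"
      and k: "\<forall>t\<in>verts T. card (bag t) \<le> k + 1"
      using insert.IH unfolding treewidth_at_most_def by blast
    obtain t where "t \<in> verts T" using tree_nonempty[OF tree_decomposition_tree[OF td]] by blast
    moreover have "tree_decomposition ({v}, {}) ({0}, {}) (\<lambda>_. {v})"
      using tree_decomposition_trivial[of "({v}, {})"] by simp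
    ultimately have "treewidth_at_most (graph_union (verts G \<union> V, edges G) ({v}, {})) k"
      using treewidth_at_most_glue[OF td k] False by fastforce
    then show ?thesis by (simp add: graph_union_def)
  qed
qed

section \<open>Line graphs\<close>

lemma verts_line_graph [simp]: "verts (line_graph G) = edges G"
  by (simp add: line_graph_def)

lemma edges_line_graph:
  "edges (line_graph G) = {{e, f} | e f. e \<in> edges G \<and> f \<in> edges G \<and> e \<noteq> f \<and> e \<inter> f \<noteq> {}}"
  by (simp add: line_graph_def)

lemma line_graph_edge_subset: "e \<in> edges (line_graph G) \<Longrightarrow> e \<subseteq> verts (line_graph G)"
  unfolding edges_line_graph by auto

lemma tree_decomposition_of_line_graph:
  assumes td: "tree_decomposition (line_graph G) T bag"
  shows "tree_decomposition (\<Union>(edges G), edges G) T (\<lambda>t. \<Union>(bag t))"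
  unfolding tree_decomposition_def verts_pair edges_pair
proof (intro conjI ballI)
  show "tree T" using td by (rule tree_decomposition_tree)
  fix t assume "t \<in> verts T"
  then have "bag t \<subseteq> edges G" using tree_decomposition_bag[OF td] by simp
  then show "\<Union>(bag t) \<subseteq> \<Union>(edges G)" by blast
next
  fix v assume "v \<in> \<Union>(edges G)"
  then obtain e where "e \<in> edges G" "v \<in> e" by blast
  moreover have "e \<in> verts (line_graph G)" using \<open>e \<in> edges G\<close> by simp
  then obtain t where "t \<in> verts T" "e \<in> bag t" using tree_decomposition_vertex[OF td] by blast
  ultimately show "\<exists>t\<in>verts T. v \<in> \<Union>(bag t)" by blast
next
  fix e assume "e \<in> edges G"
  then have "e \<in> verts (line_graph G)" by simp
  then obtain t where "t \<in> verts T" "e \<in> bag t" using tree_decomposition_vertex[OF td] by blast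
  then show "\<exists>t\<in>verts T. e \<subseteq> \<Union>(bag t)" by blast
next
  fix v assume "v \<in> \<Union>(edges G)"
  define occ where "occ e = {t\<in>verts T. e \<in> bag t}" for e
  have occ_Union: "{t\<in>verts T. v \<in> \<Union>(bag t)} = \<Union>(occ ` {e\<in>edges G. v \<in> e})"
    unfolding occ_def using tree_decomposition_bag[OF td] by fastforce
  show "connected_in T {t\<in>verts T. v \<in> \<Union>(bag t)}"
    unfolding occ_Union
  proof (rule connected_in_Union)
    fix A assume "A \<in> occ ` {e\<in>edges G. v \<in> e}"
    then obtain e where "e \<in> edges G" "A = occ e" by blast
    then have "e \<in> verts (line_graph G)" "A = occ e" by simp_all
    then show "connected_in T A" unfolding occ_def using tree_decomposition_connected[OF td] by simp
  next
    fix A B assume "A \<in> occ ` {e\<in>edges G. v \<in> e}" "B \<in> occ ` {e\<in>edges G. v \<in> e}"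
    then obtain e f where ef: "e \<in> edges G" "f \<in> edges G" "v \<in> e" "v \<in> f" "A = occ e" "B = occ f"
      by blast
    have "e = f \<or> {e, f} \<in> edges (line_graph G)"
      unfolding edges_line_graph using ef(1-4) by blast
    then show "A \<inter> B \<noteq> {}"
      using tree_decomposition_occurrences_meet[OF td] ef(1,5,6) unfolding occ_def by simp
  qed
qed

lemma treewidth_at_most_of_line_graph:
  assumes G: "graph G" and "treewidth_at_most (line_graph G) k"
  shows "treewidth_at_most G (2 * k + 1)"
proof -
  obtain T bag where td: "tree_decomposition (line_graph G) T bag"
    and k: "\<forall>t\<in>verts T. card (bag t) \<le> k + 1"
    using assms(2) unfolding treewidth_at_most_def by blast
  have "card (\<Union>(bag t)) \<le> 2 * k + 1 + 1" if t: "t \<in> verts T" for t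
  proof -
    have "card (bag t) \<le> k + 1" using k t by blast
    have "bag t \<subseteq> edges G" using tree_decomposition_bag[OF td t] by simp
    then have "card (\<Union>(bag t)) \<le> (\<Sum>e\<in>bag t. 2)"
      using card_Union_le_sum_card[of "bag t"] graph_edge_card[OF G] by (simp add: subset_iff)
    also have "\<dots> \<le> 2 * (k + 1)" using \<open>card (bag t) \<le> k + 1\<close> by simp
    finally show ?thesis by simp
  qed
  then have "treewidth_at_most (\<Union>(edges G), edges G) (2 * k + 1)"
    using tree_decomposition_of_line_graph[OF td] unfolding treewidth_at_most_def by blast
  then have "treewidth_at_most (verts (\<Union>(edges G), edges G) \<union> (verts G - \<Union>(edges G)),
      edges (\<Union>(edges G), edges G)) (2 * k + 1)"
    by (rule treewidth_at_most_add_vertices[rotated]) (simp add: graph_finite[OF G])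
  moreover have "(verts (\<Union>(edges G), edges G) \<union> (verts G - \<Union>(edges G)),
      edges (\<Union>(edges G), edges G)) = G"
  proof -
    have "\<Union>(edges G) \<subseteq> verts G" using graph_edge_subset[OF G] by blast
    then show ?thesis by (simp add: Un_absorb1)
  qed
  ultimately show ?thesis by simp
qed

lemma line_graph_map_graph:
  assumes G: "graph G" and inj: "inj_on f (verts G)"
  shows "line_graph (map_graph f G) = map_graph (image f) (line_graph G)"
proof -
  have same: "f ` e = f ` e' \<longleftrightarrow> e = e'" and meet: "f ` e \<inter> f ` e' = {} \<longleftrightarrow> e \<inter> e' = {}"
    if "e \<in> edges G" "e' \<in> edges G" for e e'
  proof -
    have sub: "e \<subseteq> verts G" "e' \<subseteq> verts G" using graph_edge_subset[OF G] that by simp_all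
    show "f ` e = f ` e' \<longleftrightarrow> e = e'" by (rule inj_on_image_eq_iff[OF inj sub])
    have "f ` e \<inter> f ` e' = f ` (e \<inter> e')" by (rule inj_on_image_Int[OF inj sub, symmetric])
    then show "f ` e \<inter> f ` e' = {} \<longleftrightarrow> e \<inter> e' = {}" by simp
  qed
  let ?L = "{{x, y} | x y. x \<in> image f ` edges G \<and> y \<in> image f ` edges G \<and> x \<noteq> y \<and> x \<inter> y \<noteq> {}}"
  let ?R = "image (image f) ` {{e, e'} | e e'. e \<in> edges G \<and> e' \<in> edges G \<and> e \<noteq> e' \<and> e \<inter> e' \<noteq> {}}"
  have "?L \<subseteq> ?R"
  proof
    fix E assume "E \<in> ?L"
    then obtain e e' where e: "e \<in> edges G" "e' \<in> edges G" "E = {f ` e, f ` e'}"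
      and "f ` e \<noteq> f ` e'" "f ` e \<inter> f ` e' \<noteq> {}" by blast
    then have "e \<noteq> e'" "e \<inter> e' \<noteq> {}" using same meet by simp_all
    then have "{e, e'} \<in> {{e, e'} | e e'. e \<in> edges G \<and> e' \<in> edges G \<and> e \<noteq> e' \<and> e \<inter> e' \<noteq> {}}"
      using e(1,2) by (intro CollectI exI[of _ e] exI[of _ e']) simp
    moreover have "E = image f ` {e, e'}" using e(3) by simp
    ultimately show "E \<in> ?R" by (intro image_eqI)
  qed
  moreover have "?R \<subseteq> ?L"
  proof
    fix E assume "E \<in> ?R"
    then obtain e e' where e: "e \<in> edges G" "e' \<in> edges G" "E = image f ` {e, e'}"
      and "e \<noteq> e'" "e \<inter> e' \<noteq> {}" by blast
    then have "f ` e \<noteq> f ` e'" "f ` e \<inter> f ` e' \<noteq> {}" using same meet by simp_all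
    moreover have "E = {f ` e, f ` e'}" using e(3) by simp
    ultimately show "E \<in> ?L"
      using e(1,2) by (intro CollectI exI[of _ "f ` e"] exI[of _ "f ` e'"]) simp
  qed
  ultimately have "?L = ?R" by (rule equalityI)
  then show ?thesis by (simp only: line_graph_def map_graph_def verts_pair edges_pair)
qed

lemma graph_iso_map_graph:
  assumes "graph_iso G H"
  obtains f where "inj_on f (verts G)" "H = map_graph f G"
proof -
  obtain f where f: "bij_betw f (verts G) (verts H)" "edges H = image f ` edges G"
    using assms unfolding graph_iso_def by blast
  then have "H = map_graph f G"
    unfolding map_graph_def bij_betw_def by (metis verts_edges_pair)
  with f(1) show ?thesis using that unfolding bij_betw_def by blast
qed

lemma graph_iso_graph:
  assumes "graph_iso G H" "graph G"
  shows "graph H"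
proof -
  obtain f where "inj_on f (verts G)" "H = map_graph f G" by (rule graph_iso_map_graph[OF assms(1)])
  then show ?thesis using graph_map_graph[OF assms(2)] by simp
qed

lemma treewidth_at_most_line_graph_iso:
  assumes "graph_iso G H" and G: "graph G" and tw: "treewidth_at_most (line_graph G) k"
  shows "treewidth_at_most (line_graph H) k"
proof -
  obtain f where f: "inj_on f (verts G)" "H = map_graph f G" by (rule graph_iso_map_graph[OF assms(1)])
  have "inj_on (image f) (verts (line_graph G))" using inj_on_image_edges[OF G f(1)] by simp
  with tw show ?thesis
    unfolding f(2) line_graph_map_graph[OF G f(1)] by (rule treewidth_at_most_map_graph)
qed

section \<open>The bridge operation\<close>

text \<open>With \<open>m x1 = x2\<close>, \<open>m y1 = y2\<close>, \<open>m z1 = z2\<close>, \<^term>\<open>reroute v1 m\<close> maps the edges of G1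
bijectively onto the edges of the bridge that come from G1, the three edges at v1 becoming
the three new edges.\<close>

definition reroute :: "'a \<Rightarrow> ('a \<Rightarrow> 'a) \<Rightarrow> 'a set \<Rightarrow> 'a set" where
  "reroute v m e = (if v \<in> e then (e - {v}) \<union> m ` (e - {v}) else e)"

lemma reroute_edge: "u \<noteq> v \<Longrightarrow> reroute v m {v, u} = {u, m u}"
  unfolding reroute_def by auto

lemma reroute_at_vertex:
  assumes "graph G" "e \<in> edges G" "v \<in> e"
  obtains u where "u \<in> nbhd G v" "e = {v, u}" "reroute v m e = {u, m u}"
proof -
  obtain u where u: "u \<in> nbhd G v" "e = {v, u}" using edge_at_vertex[OF assms] .
  moreover have "u \<noteq> v" using u(1) nbhd_subset[OF assms(1)] by blast
  ultimately show ?thesis using that reroute_edge[of u v m] by simp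
qed

lemma reroute_Int_verts:
  assumes G: "graph G" and away: "m ` nbhd G v \<inter> verts G = {}" and e: "e \<in> edges G"
  shows "reroute v m e \<inter> verts G = e - {v}"
proof (cases "v \<in> e")
  case True
  then obtain u where u: "u \<in> nbhd G v" "e = {v, u}" "reroute v m e = {u, m u}"
    by (rule reroute_at_vertex[OF G e])
  have "u \<in> verts G" "u \<noteq> v" using u(1) nbhd_subset[OF G] by auto
  moreover have "m u \<notin> verts G" using away u(1) by blast
  ultimately show ?thesis using u(2,3) by auto
next
  case False
  then show ?thesis using graph_edge_subset[OF G e] unfolding reroute_def by auto
qed

lemma reroute_subset_verts_iff:
  assumes G: "graph G" and away: "m ` nbhd G v \<inter> verts G = {}" and e: "e \<in> edges G"
  shows "reroute v m e \<subseteq> verts G \<longleftrightarrow> v \<notin> e"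
proof (cases "v \<in> e")
  case True
  then obtain u where u: "u \<in> nbhd G v" "reroute v m e = {u, m u}"
    by (rule reroute_at_vertex[OF G e])
  then show ?thesis using True away by blast
next
  case False
  then show ?thesis using graph_edge_subset[OF G e] unfolding reroute_def by simp
qed

lemma inj_on_reroute:
  assumes G: "graph G" and away: "m ` nbhd G v \<inter> verts G = {}"
  shows "inj_on (reroute v m) (edges G)"
proof (rule inj_onI)
  fix e f assume e: "e \<in> edges G" and f: "f \<in> edges G" and eq: "reroute v m e = reroute v m f"
  have "e - {v} = f - {v}"
    using reroute_Int_verts[OF G away e] reroute_Int_verts[OF G away f] eq by simp
  moreover have "v \<in> e \<longleftrightarrow> v \<in> f"
    using reroute_subset_verts_iff[OF G away e] reroute_subset_verts_iff[OF G away f] eq by simp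
  ultimately show "e = f" by blast
qed

lemma reroute_meet:
  assumes G: "graph G" and away: "m ` nbhd G v \<inter> verts G = {}"
    and e: "e \<in> edges G" and f: "f \<in> edges G"
    and meet: "reroute v m e \<inter> reroute v m f \<noteq> {}"
  shows "e \<inter> f \<noteq> {}"
proof -
  obtain x where x: "x \<in> reroute v m e" "x \<in> reroute v m f" using meet by blast
  show ?thesis
  proof (cases "x \<in> verts G")
    case True
    then show ?thesis
      using x reroute_Int_verts[OF G away e] reroute_Int_verts[OF G away f] by blast
  next
    case False
    then have "v \<in> e" "v \<in> f"
      using x reroute_subset_verts_iff[OF G away e] reroute_subset_verts_iff[OF G away f] by blast+
    then show ?thesis by blast
  qed
qed

lemma reroute_image:
  assumes G: "graph G"
  shows "reroute v m ` edges G = {e\<in>edges G. v \<notin> e} \<union> (\<lambda>u. {u, m u}) ` nbhd G v"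
proof
  show "reroute v m ` edges G \<subseteq> {e\<in>edges G. v \<notin> e} \<union> (\<lambda>u. {u, m u}) ` nbhd G v"
  proof
    fix e' assume "e' \<in> reroute v m ` edges G"
    then obtain e where e: "e \<in> edges G" "e' = reroute v m e" by blast
    show "e' \<in> {e\<in>edges G. v \<notin> e} \<union> (\<lambda>u. {u, m u}) ` nbhd G v"
    proof (cases "v \<in> e")
      case True
      then obtain u where "u \<in> nbhd G v" "reroute v m e = {u, m u}"
        by (rule reroute_at_vertex[OF G e(1)])
      then show ?thesis using e(2) by blast
    next
      case False
      then show ?thesis using e unfolding reroute_def by simp
    qed
  qed
next
  show "{e\<in>edges G. v \<notin> e} \<union> (\<lambda>u. {u, m u}) ` nbhd G v \<subseteq> reroute v m ` edges G"
  proof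
    fix e' assume "e' \<in> {e\<in>edges G. v \<notin> e} \<union> (\<lambda>u. {u, m u}) ` nbhd G v"
    then consider "e' \<in> edges G" "v \<notin> e'" | u where "u \<in> nbhd G v" "e' = {u, m u}" by blast
    then show "e' \<in> reroute v m ` edges G"
    proof cases
      case 1
      then have "e' = reroute v m e'" unfolding reroute_def by simp
      then show ?thesis using 1(1) by (rule image_eqI)
    next
      case (2 u)
      have "u \<noteq> v" using 2(1) nbhd_subset[OF G] by blast
      then have "e' = reroute v m {v, u}" using 2(2) by (simp add: reroute_edge)
      moreover have "{v, u} \<in> edges G" using 2(1) unfolding nbhd_def by (simp add: insert_commute)
      ultimately show ?thesis by (rule image_eqI)
    qed
  qed
qed

lemma reroute_adjacent:
  assumes G: "graph G" and away: "m ` nbhd G v \<inter> verts G = {}"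
    and e': "e' \<in> reroute v m ` edges G" and f': "f' \<in> reroute v m ` edges G"
    and "e' \<noteq> f'" "e' \<inter> f' \<noteq> {}"
  shows "{e', f'} \<in> edges (map_graph (reroute v m) (line_graph G))"
proof -
  obtain e f where ef: "e \<in> edges G" "f \<in> edges G" "e' = reroute v m e" "f' = reroute v m f"
    using e' f' by blast
  then have "e \<noteq> f" "e \<inter> f \<noteq> {}" using assms(5,6) reroute_meet[OF G away ef(1,2)] by auto
  then have "{e, f} \<in> edges (line_graph G)" unfolding edges_line_graph using ef(1,2) by blast
  then have "reroute v m ` {e, f} \<in> image (reroute v m) ` edges (line_graph G)" by (rule imageI)
  then show ?thesis using ef(3,4) by simp
qed

lemma clique_reroute_nbhd:
  assumes G: "graph G"
  shows "clique (map_graph (reroute v m) (line_graph G)) ((\<lambda>u. {u, m u}) ` nbhd G v)"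
  unfolding clique_def
proof (intro ballI impI)
  fix a b assume "a \<in> (\<lambda>u. {u, m u}) ` nbhd G v" "b \<in> (\<lambda>u. {u, m u}) ` nbhd G v" "a \<noteq> b"
  then obtain u u' where u: "u \<in> nbhd G v" "u' \<in> nbhd G v" "a = {u, m u}" "b = {u', m u'}" "u \<noteq> u'"
    by blast
  have uv: "u \<noteq> v" "u' \<noteq> v" using u(1,2) nbhd_subset[OF G] by auto
  have "{v, u} \<in> edges G" "{v, u'} \<in> edges G" using u(1,2) unfolding nbhd_def by (simp_all add: insert_commute)
  moreover have "{v, u} \<noteq> {v, u'}" using u(5) uv by (auto simp: doubleton_eq_iff)
  ultimately have "{{v, u}, {v, u'}} \<in> edges (line_graph G)" unfolding edges_line_graph by blast
  then have "reroute v m ` {{v, u}, {v, u'}} \<in> image (reroute v m) ` edges (line_graph G)"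
    by (rule imageI)
  then show "{a, b} \<in> edges (map_graph (reroute v m) (line_graph G))"
    using u(3,4) reroute_edge[OF uv(1)] reroute_edge[OF uv(2)] by simp
qed

lemma card3_distinct: "card {x, y, z} = 3 \<Longrightarrow> x \<noteq> y \<and> x \<noteq> z \<and> y \<noteq> z"
  by (cases "x = y"; cases "x = z"; cases "y = z") (auto simp: card_insert_if)

lemma verts_bridge: "verts (bridge G1 v1 G2 v2 x1 y1 z1 x2 y2 z2) = (verts G1 - {v1}) \<union> (verts G2 - {v2})"
  and edges_bridge: "edges (bridge G1 v1 G2 v2 x1 y1 z1 x2 y2 z2) =
    {e\<in>edges G1. v1 \<notin> e} \<union> {e\<in>edges G2. v2 \<notin> e} \<union> {{x1, x2}, {y1, y2}, {z1, z2}}"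
  by (simp_all add: bridge_def)

lemma graph_bridge:
  assumes G1: "graph G1" and G2: "graph G2" and disj: "verts G1 \<inter> verts G2 = {}"
    and nb1: "nbhd G1 v1 = {x1, y1, z1}" and nb2: "nbhd G2 v2 = {x2, y2, z2}"
  shows "graph (bridge G1 v1 G2 v2 x1 y1 z1 x2 y2 z2)" (is "graph ?G")
  unfolding graph_iff
proof (intro conjI ballI)
  show "finite (verts ?G)" using G1 G2 by (simp add: verts_bridge graph_finite)
  have s1: "{x1, y1, z1} \<subseteq> verts G1 - {v1}" using nbhd_subset[OF G1, of v1] nb1 by simp
  have s2: "{x2, y2, z2} \<subseteq> verts G2 - {v2}" using nbhd_subset[OF G2, of v2] nb2 by simp
  have new: "{a, b} \<subseteq> verts ?G \<and> card {a, b} = 2" if "a \<in> verts G1 - {v1}" "b \<in> verts G2 - {v2}" for a b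
  proof -
    have "a \<noteq> b" using that disj by blast
    then show ?thesis using that by (simp add: verts_bridge)
  qed
  fix e assume "e \<in> edges ?G"
  then consider "e \<in> edges G1" "v1 \<notin> e" | "e \<in> edges G2" "v2 \<notin> e"
    | "e = {x1, x2}" | "e = {y1, y2}" | "e = {z1, z2}"
    unfolding edges_bridge by blast
  then have "e \<subseteq> verts ?G \<and> card e = 2"
  proof cases
    case 1
    then show ?thesis using graph_edge_subset[OF G1] graph_edge_card[OF G1] by (auto simp: verts_bridge)
  next
    case 2
    then show ?thesis using graph_edge_subset[OF G2] graph_edge_card[OF G2] by (auto simp: verts_bridge)
  qed (use new s1 s2 in auto)
  then show "e \<subseteq> verts ?G" "card e = 2" by simp_all
qed

lemma treewidth_at_most_line_graph_cover:
  assumes tw: "treewidth_at_most (graph_union H1 H2) k"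
    and edges_G: "edges G = verts H1 \<union> verts H2"
    and adj1: "\<And>e f. e \<in> verts H1 \<Longrightarrow> f \<in> verts H1 \<Longrightarrow> e \<noteq> f \<Longrightarrow> e \<inter> f \<noteq> {} \<Longrightarrow> {e, f} \<in> edges H1"
    and adj2: "\<And>e f. e \<in> verts H2 \<Longrightarrow> f \<in> verts H2 \<Longrightarrow> e \<noteq> f \<Longrightarrow> e \<inter> f \<noteq> {} \<Longrightarrow> {e, f} \<in> edges H2"
    and cross: "\<And>e f. e \<in> verts H1 - verts H2 \<Longrightarrow> f \<in> verts H2 - verts H1 \<Longrightarrow> e \<inter> f = {}"
  shows "treewidth_at_most (line_graph G) k"
proof (rule treewidth_at_most_spanning_subgraph[OF tw])
  show "verts (line_graph G) = verts (graph_union H1 H2)"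
    unfolding verts_line_graph verts_graph_union by (rule edges_G)
  show "edges (line_graph G) \<subseteq> edges (graph_union H1 H2)"
  proof
    fix E assume "E \<in> edges (line_graph G)"
    then obtain e f where E: "E = {e, f}" and ef: "e \<in> verts H1 \<union> verts H2" "f \<in> verts H1 \<union> verts H2"
      "e \<noteq> f" "e \<inter> f \<noteq> {}"
      unfolding edges_line_graph edges_G by blast
    consider "e \<in> verts H1" "f \<in> verts H1" | "e \<in> verts H2" "f \<in> verts H2"
      | "e \<in> verts H1 - verts H2" "f \<in> verts H2 - verts H1"
      | "e \<in> verts H2 - verts H1" "f \<in> verts H1 - verts H2"
      using ef(1,2) by blast
    then show "E \<in> edges (graph_union H1 H2)"
    proof cases
      case 1
      then show ?thesis using adj1 ef(3,4) E by simp
    next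
      case 2
      then show ?thesis using adj2 ef(3,4) E by simp
    next
      case 3
      then show ?thesis using cross ef(4) by blast
    next
      case 4
      then show ?thesis using cross ef(4) by blast
    qed
  qed
qed

lemma treewidth_at_most_line_graph_bridge:
  assumes G1: "graph G1" and G2: "graph G2" and disj: "verts G1 \<inter> verts G2 = {}"
    and nb1: "nbhd G1 v1 = {x1, y1, z1}" and c1: "card {x1, y1, z1} = 3"
    and nb2: "nbhd G2 v2 = {x2, y2, z2}" and c2: "card {x2, y2, z2} = 3"
    and tw1: "treewidth_at_most (line_graph G1) k" and tw2: "treewidth_at_most (line_graph G2) k"
  shows "treewidth_at_most (line_graph (bridge G1 v1 G2 v2 x1 y1 z1 x2 y2 z2)) k"
proof -
  define m1 where "m1 u = (if u = x1 then x2 else if u = y1 then y2 else z2)" for u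
  define m2 where "m2 u = (if u = x2 then x1 else if u = y2 then y1 else z1)" for u
  define N where "N = {{x1, x2}, {y1, y2}, {z1, z2}}"
  define H1 where "H1 = map_graph (reroute v1 m1) (line_graph G1)"
  define H2 where "H2 = map_graph (reroute v2 m2) (line_graph G2)"
  have d1: "x1 \<noteq> y1" "x1 \<noteq> z1" "y1 \<noteq> z1" using card3_distinct[OF c1] by simp_all
  have d2: "x2 \<noteq> y2" "x2 \<noteq> z2" "y2 \<noteq> z2" using card3_distinct[OF c2] by simp_all
  have s1: "{x1, y1, z1} \<subseteq> verts G1" using nbhd_subset[OF G1, of v1] nb1 by simp
  have s2: "{x2, y2, z2} \<subseteq> verts G2" using nbhd_subset[OF G2, of v2] nb2 by simp
  have away1: "m1 ` nbhd G1 v1 \<inter> verts G1 = {}" unfolding nb1 m1_def using d1 s2 disj by auto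
  have away2: "m2 ` nbhd G2 v2 \<inter> verts G2 = {}" unfolding nb2 m2_def using d2 s1 disj by auto
  have N1: "(\<lambda>u. {u, m1 u}) ` nbhd G1 v1 = N" unfolding nb1 N_def m1_def using d1 by simp
  have N2: "(\<lambda>u. {u, m2 u}) ` nbhd G2 v2 = N" unfolding nb2 N_def m2_def using d2
    by (simp add: insert_commute[of x2 x1 "{}"] insert_commute[of y2 y1 "{}"] insert_commute[of z2 z1 "{}"])
  have verts1: "verts H1 = {e\<in>edges G1. v1 \<notin> e} \<union> N" unfolding H1_def using reroute_image[OF G1] N1 by simp
  have verts2: "verts H2 = {e\<in>edges G2. v2 \<notin> e} \<union> N" unfolding H2_def using reroute_image[OF G2] N2 by simp
  have old_disjoint: "e \<inter> f = {}" if "e \<in> edges G1" "f \<in> edges G2" for e f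
    using graph_edge_subset[OF G1 that(1)] graph_edge_subset[OF G2 that(2)] disj by blast
  have "{e\<in>edges G1. v1 \<notin> e} \<inter> {e\<in>edges G2. v2 \<notin> e} = {}"
    using old_disjoint graph_edge_card[OF G1] by fastforce
  then have sep: "verts H1 \<inter> verts H2 = {{x1, x2}, {y1, y2}, {z1, z2}}"
    unfolding verts1 verts2 N_def[symmetric] by blast
  have tw: "treewidth_at_most (graph_union H1 H2) k"
  proof (rule treewidth_at_most_triangle_sum[OF _ _ sep])
    show "treewidth_at_most H1 k"
      unfolding H1_def using tw1 inj_on_reroute[OF G1 away1] by (simp add: treewidth_at_most_map_graph)
    show "treewidth_at_most H2 k"
      unfolding H2_def using tw2 inj_on_reroute[OF G2 away2] by (simp add: treewidth_at_most_map_graph)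
    show "clique H1 {{x1, x2}, {y1, y2}, {z1, z2}}"
      using clique_reroute_nbhd[OF G1, of v1 m1] unfolding H1_def N1 N_def .
    show "clique H2 {{x1, x2}, {y1, y2}, {z1, z2}}"
      using clique_reroute_nbhd[OF G2, of v2 m2] unfolding H2_def N2 N_def .
  qed
  show ?thesis
  proof (rule treewidth_at_most_line_graph_cover[OF tw])
    show "edges (bridge G1 v1 G2 v2 x1 y1 z1 x2 y2 z2) = verts H1 \<union> verts H2"
      unfolding edges_bridge verts1 verts2 N_def[symmetric] by blast
    show "{e, f} \<in> edges H1" if "e \<in> verts H1" "f \<in> verts H1" "e \<noteq> f" "e \<inter> f \<noteq> {}" for e f
      using that reroute_adjacent[OF G1 away1] unfolding H1_def by simp
    show "{e, f} \<in> edges H2" if "e \<in> verts H2" "f \<in> verts H2" "e \<noteq> f" "e \<inter> f \<noteq> {}" for e f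
      using that reroute_adjacent[OF G2 away2] unfolding H2_def by simp
    show "e \<inter> f = {}" if "e \<in> verts H1 - verts H2" "f \<in> verts H2 - verts H1" for e f
      using that old_disjoint unfolding verts1 verts2 by blast
  qed
qed

theorem theorem14:
  fixes B :: "'a graph set" and w :: nat
  assumes "\<forall>H\<in>B. graph H"
    and "\<forall>H\<in>B. treewidth (line_graph H) \<le> w"
  shows "\<forall>G\<in>bridge_closure B. treewidth G \<le> 2 * w + 1"
proof
  fix G assume "G \<in> bridge_closure B"
  then have "graph G \<and> treewidth_at_most (line_graph G) w"
  proof induction
    case (base G)
    then show ?case using assms treewidth_at_most_iff[OF line_graph_edge_subset] by blast
  next
    case (iso G H)
    then show ?case using graph_iso_graph treewidth_at_most_line_graph_iso by blast
  next
    case (bridge G1 G2 v1 v2 x1 y1 z1 x2 y2 z2)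
    have G1: "graph G1" "treewidth_at_most (line_graph G1) w" using bridge.IH(1) by simp_all
    have G2: "graph G2" "treewidth_at_most (line_graph G2) w" using bridge.IH(2) by simp_all
    show ?case
      using graph_bridge[OF G1(1) G2(1) bridge.hyps(3,6,8)]
        treewidth_at_most_line_graph_bridge[OF G1(1) G2(1) bridge.hyps(3,6,7,8,9) G1(2) G2(2)]
      by simp
  qed
  then show "treewidth G \<le> 2 * w + 1"
    using treewidth_at_most_of_line_graph treewidth_at_most_iff[OF graph_edge_subset] by blast
qed

end
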